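(* Consider the compulsory constrained two-facility location setting described in the context, with $n$ agents at locations $\mathbf{x}=(x_1,\dots,x_n)\in\mathbb{R}^n$ and alternative multiset $A=\{a_1\le a_2\le\dots\le a_m\}$, $m\ge 2$. Fix any $i\in\{1,\dots,n\}$ and let $\mathbf{x}_{(i)}$ be the $i$-th smallest entry of $\mathbf{x}$. The mechanism that, on every reported profile $\mathbf{x}$, outputs the peak of the point $\mathbf{x}_{(i)}$ in $AP$ (i.e. the pair $(a_k,a_{k+1})$ with $\mathbf{x}_{(i)}\in Z_k$) is group strategyproof.
   Context: Agents $1,\dots,n$ have private locations $x_j\in\mathbb{R}$ and each is served by both facilities $F_1,F_2$. $A=\{a_1,\dots,a_m\}$ is a multiset of real alternative locations with $a_1\le\dots\le a_m$; a feasible outcome places $F_1$ at $y_1\in A$ and $F_2$ at $y_2\in A\setminus\{y_1\}$ (removing one copy from the multiset), i.e. at most one facility per element of $A$. The cost of agent $j$ under $\mathbf{y}=(y_1,y_2)$ is $c_j(\mathbf{y},x_j)=\max\{|y_1-x_j|,|y_2-x_j|\}$. Let $AP=\{(a_1,a_2),(a_2,a_3),\dots,(a_{m-1},a_m)\}$. The zones are $Z_1=(-\infty,\frac{a_1+a_3}{2}]$, $Z_k=(\frac{a_{k-1}+a_{k+1}}{2},\frac{a_k+a_{k+2}}{2}]$ for $2\le k\le m-2$, $Z_{m-1}=(\frac{a_{m-2}+a_m}{2},\infty)$ (with $Z_1=\mathbb{R}$ if $m=2$); they partition $\mathbb{R}$, and the peak in $AP$ of a point $z\in Z_k$ is $(a_k,a_{k+1})$.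 A mechanism maps reported locations to a feasible outcome. It is group strategyproof if for every true profile $\mathbf{x}$, every nonempty $S\subseteq N$ and every misreport $\mathbf{x}'_S$, some $j\in S$ satisfies $c_j(f(\mathbf{x}),x_j)\le c_j(f(\mathbf{x}'_S,\mathbf{x}_{-S}),x_j)$. *)

theory Defs
  imports Main "HOL-Library.Multiset" Complex_Main
begin

(* Alternatives: the multiset A = {a_1 <= ... <= a_m} is given as a sorted list a,
   with a_{k+1} = a ! k (0-indexed). Agents are 0..n-1, profiles are nat => real. *)

type_synonym profile = "nat \<Rightarrow> real"
type_synonym outcome = "real \<times> real"

definition cost :: "outcome \<Rightarrow> real \<Rightarrow> real" where
  "cost y x = max \<bar>fst y - x\<bar> \<bar>snd y - x\<bar>"

(* Zone Z_{k+1} (0-indexed k, 0 <= k <= m-2), peak (a!k, a!(k+1)) *)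
definition in_zone :: "real list \<Rightarrow> nat \<Rightarrow> real \<Rightarrow> bool" where
  "in_zone a k z \<longleftrightarrow> k \<le> length a - 2 \<and>
     (k = 0 \<or> (a ! (k - 1) + a ! (k + 1)) / 2 < z) \<and>
     (k = length a - 2 \<or> z \<le> (a ! k + a ! (k + 2)) / 2)"

definition peak :: "real list \<Rightarrow> real \<Rightarrow> outcome" where
  "peak a z = (let k = (THE k. in_zone a k z) in (a ! k, a ! (k + 1)))"

definition order_stat :: "nat \<Rightarrow> nat \<Rightarrow> profile \<Rightarrow> real" where
  "order_stat n i x = sort (map x [0..<n]) ! (i - 1)"

definition peak_mechanism :: "real list \<Rightarrow> nat \<Rightarrow> nat \<Rightarrow> profile \<Rightarrow> outcome" where
  "peak_mechanism a n i x = peak a (order_stat n i x)"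

definition group_strategyproof :: "nat \<Rightarrow> (profile \<Rightarrow> outcome) \<Rightarrow> bool" where
  "group_strategyproof n f \<longleftrightarrow>
     (\<forall>x S x'. S \<subseteq> {0..<n} \<and> S \<noteq> {} \<longrightarrow>
        (\<exists>j\<in>S. cost (f x) (x j)
                 \<le> cost (f (\<lambda>l. if l \<in> S then x' l else x l)) (x j)))"

end

(* For an agent at x the cost of the pair (a_k, a_(k+1)) is max (x - a_k) (a_(k+1) - x), which,
   as a function of k, decreases up to the zone of x and increases after it; as the zone index is
   monotone in the location, an agent is never better off when the reported point z moves further
   away from its location. If a coalition shifts the i-th order statistic up from z, then some
   member located at or below z must have reported above z, so the peak moved away from that
   member; a downward shift is symmetric. *)

theory Submission
  imports Defs
begin

definition zone_ub :: "real list \<Rightarrow> nat \<Rightarrow> real" where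
  "zone_ub a l = (a ! l + a ! (l + 2)) / 2"

definition zone :: "real list \<Rightarrow> real \<Rightarrow> nat" where
  "zone a z = (THE k. in_zone a k z)"

definition adjacent_pair :: "real list \<Rightarrow> nat \<Rightarrow> outcome" where
  "adjacent_pair a k = (a ! k, a ! (k + 1))"

lemma zone_ub_mono:
  assumes "sorted a" "l \<le> l'" "l' + 2 < length a"
  shows "zone_ub a l \<le> zone_ub a l'"
  using sorted_nth_mono[OF assms(1), of l l'] sorted_nth_mono[OF assms(1), of "l + 2" "l' + 2"] assms
  unfolding zone_ub_def by auto

lemma in_zone_iff_zone_ub:
  "in_zone a k z \<longleftrightarrow> k \<le> length a - 2 \<and> (k = 0 \<or> zone_ub a (k - 1) < z) \<and>
     (k = length a - 2 \<or> z \<le> zone_ub a k)"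
  unfolding in_zone_def zone_ub_def by (cases k) auto

lemma in_zone_mono:
  assumes "sorted a" "in_zone a j x" "in_zone a k z" "x \<le> z"
  shows "j \<le> k"
proof (rule ccontr)
  assume "\<not> j \<le> k"
  then have "k < j" by simp
  with assms(2) have j: "j \<le> length a - 2" "zone_ub a (j - 1) < x"
    unfolding in_zone_iff_zone_ub by auto
  with \<open>k < j\<close> assms(3) have "z \<le> zone_ub a k"
    unfolding in_zone_iff_zone_ub by auto
  also have "\<dots> \<le> zone_ub a (j - 1)"
    using zone_ub_mono[OF assms(1), of k "j - 1"] \<open>k < j\<close> j by auto
  finally show False using j assms(4) by auto
qed

lemma in_zone_exists:
  assumes "length a \<ge> 2"
  shows "\<exists>k. in_zone a k z"
proof -
  define k where "k = (LEAST k. k = length a - 2 \<or> z \<le> zone_ub a k)"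
  have "k = length a - 2 \<or> z \<le> zone_ub a k"
    unfolding k_def by (rule LeastI[of _ "length a - 2"]) simp
  moreover have "k \<le> length a - 2"
    unfolding k_def by (rule Least_le) simp
  moreover have "k = 0 \<or> zone_ub a (k - 1) < z"
  proof (cases k)
    case (Suc l)
    then have "\<not> (l = length a - 2 \<or> z \<le> zone_ub a l)"
      using not_less_Least[of l "\<lambda>k. k = length a - 2 \<or> z \<le> zone_ub a k"]
      unfolding k_def by simp
    with Suc show ?thesis by simp
  qed simp
  ultimately show ?thesis
    unfolding in_zone_iff_zone_ub by blast
qed

lemma in_zone_zone:
  assumes "sorted a" "length a \<ge> 2"
  shows "in_zone a (zone a z) z"
proof -
  obtain k where k: "in_zone a k z"
    using in_zone_exists[OF assms(2)] by blast
  moreover have "j = k" if "in_zone a j z" for j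
    using in_zone_mono[OF assms(1) that k] in_zone_mono[OF assms(1) k that] by simp
  ultimately have "\<exists>!k. in_zone a k z"
    by blast
  then show ?thesis
    unfolding zone_def by (rule theI')
qed

lemma zone_mono:
  assumes "sorted a" "length a \<ge> 2" "z \<le> z'"
  shows "zone a z \<le> zone a z'"
  using in_zone_mono[OF assms(1) in_zone_zone[OF assms(1,2)] in_zone_zone[OF assms(1,2)] assms(3)] .

lemma peak_eq_adjacent_pair_zone: "peak a z = adjacent_pair a (zone a z)"
  unfolding peak_def zone_def adjacent_pair_def by (simp add: Let_def)

lemma cost_adjacent_pair:
  assumes "sorted a" "k + 1 < length a"
  shows "cost (adjacent_pair a k) x = max (x - a ! k) (a ! (k + 1) - x)"
  using sorted_nth_mono[OF assms(1), of k "k + 1"] assms(2)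
  unfolding cost_def adjacent_pair_def by (simp add: max_def abs_if)

text \<open>Passing from adjacent_pair a k to adjacent_pair a (k + 1) trades the term x - a!k
  for a!(k+2) - x, which is no larger exactly when x \<ge> zone_ub a k.\<close>

lemma cost_adjacent_pair_le_Suc:
  assumes "sorted a" "k + 2 < length a" "x \<le> zone_ub a k"
  shows "cost (adjacent_pair a k) x \<le> cost (adjacent_pair a (Suc k)) x"
  using sorted_nth_mono[OF assms(1), of "k + 1" "k + 2"] assms(2,3)
  by (simp add: cost_adjacent_pair[OF assms(1)] zone_ub_def le_max_iff_disj)

lemma cost_adjacent_pair_Suc_le:
  assumes "sorted a" "k + 2 < length a" "zone_ub a k \<le> x"
  shows "cost (adjacent_pair a (Suc k)) x \<le> cost (adjacent_pair a k) x"
  using sorted_nth_mono[OF assms(1), of k "k + 1"] assms(2,3)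
  by (simp add: cost_adjacent_pair[OF assms(1)] zone_ub_def le_max_iff_disj)

lemma cost_adjacent_pair_mono_right_of_zone:
  assumes "sorted a" "in_zone a j x" "j \<le> k" "k \<le> k'" "k' \<le> length a - 2"
  shows "cost (adjacent_pair a k) x \<le> cost (adjacent_pair a k') x"
  using assms(4,5)
proof (induction k' rule: dec_induct)
  case (step n)
  then have "n + 2 < length a"
    by linarith
  have "x \<le> zone_ub a j"
    using assms(2,3) step.hyps \<open>n + 2 < length a\<close> unfolding in_zone_iff_zone_ub by auto
  also have "\<dots> \<le> zone_ub a n"
    using zone_ub_mono[OF assms(1)] assms(3) step.hyps \<open>n + 2 < length a\<close> by simp
  finally have "cost (adjacent_pair a n) x \<le> cost (adjacent_pair a (Suc n)) x"
    using cost_adjacent_pair_le_Suc[OF assms(1) \<open>n + 2 < length a\<close>] by blast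
  with step show ?case
    by simp
qed simp

lemma cost_adjacent_pair_mono_left_of_zone:
  assumes "sorted a" "in_zone a j x" "k' \<le> k" "k \<le> j"
  shows "cost (adjacent_pair a k) x \<le> cost (adjacent_pair a k') x"
  using assms(3)
proof (induction k' rule: inc_induct)
  case (step n)
  have j: "j \<le> length a - 2" "zone_ub a (j - 1) < x"
    using assms(2,4) step.hyps unfolding in_zone_iff_zone_ub by auto
  then have "n + 2 < length a"
    using assms(4) step.hyps by linarith
  have "zone_ub a n \<le> zone_ub a (j - 1)"
    using zone_ub_mono[OF assms(1)] assms(4) step.hyps \<open>n + 2 < length a\<close> j(1) by simp
  also have "\<dots> < x"
    using j(2) .
  finally have "cost (adjacent_pair a (Suc n)) x \<le> cost (adjacent_pair a n) x"
    using cost_adjacent_pair_Suc_le[OF assms(1) \<open>n + 2 < length a\<close>] by simp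
  with step.IH show ?case
    by simp
qed simp

lemma cost_peak_mono_right:
  assumes "sorted a" "length a \<ge> 2" "x \<le> z" "z \<le> z'"
  shows "cost (peak a z) x \<le> cost (peak a z') x"
  unfolding peak_eq_adjacent_pair_zone
proof (rule cost_adjacent_pair_mono_right_of_zone[OF assms(1) in_zone_zone[OF assms(1,2)]])
  show "zone a x \<le> zone a z" "zone a z \<le> zone a z'"
    using zone_mono[OF assms(1,2)] assms(3,4) by simp_all
  show "zone a z' \<le> length a - 2"
    using in_zone_zone[OF assms(1,2)] unfolding in_zone_def by simp
qed

lemma cost_peak_mono_left:
  assumes "sorted a" "length a \<ge> 2" "z \<le> x" "z' \<le> z"
  shows "cost (peak a z) x \<le> cost (peak a z') x"
  unfolding peak_eq_adjacent_pair_zone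
  by (rule cost_adjacent_pair_mono_left_of_zone[OF assms(1) in_zone_zone[OF assms(1,2)]])
    (use zone_mono[OF assms(1,2)] assms(3,4) in simp_all)

lemma sorted_nth_downclosed_iff:
  fixes s :: "'a::linorder list"
  assumes "sorted s" and downclosed: "\<And>v w. P v \<Longrightarrow> w \<le> v \<Longrightarrow> P w" and "p < length s"
  shows "P (s ! p) \<longleftrightarrow> p < length (filter P s)"
proof
  assume "P (s ! p)"
  then have "{0..p} \<subseteq> {q. q < length s \<and> P (s ! q)}"
    using downclosed sorted_nth_mono[OF assms(1)] assms(3) by fastforce
  from card_mono[OF _ this] show "p < length (filter P s)"
    unfolding length_filter_conv_card by simp
next
  assume p: "p < length (filter P s)"
  show "P (s ! p)"
  proof (rule ccontr)
    assume "\<not> P (s ! p)"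
    have "q < p" if "q < length s" "P (s ! q)" for q
    proof (rule ccontr)
      assume "\<not> q < p"
      then have "s ! p \<le> s ! q"
        using sorted_nth_mono[OF assms(1)] that(1) by simp
      with \<open>\<not> P (s ! p)\<close> that(2) downclosed show False
        by blast
    qed
    then have "{q. q < length s \<and> P (s ! q)} \<subseteq> {0..<p}"
      by auto
    from card_mono[OF _ this] show False
      using p unfolding length_filter_conv_card by simp
  qed
qed

lemma order_stat_downclosed_iff:
  assumes "\<And>v w. P v \<Longrightarrow> w \<le> v \<Longrightarrow> P w" "1 \<le> i" "i \<le> n"
  shows "P (order_stat n i x) \<longleftrightarrow> i \<le> card {l. l < n \<and> P (x l)}"
proof -
  have "length (filter P (sort (map x [0..<n]))) = length (filter P (map x [0..<n]))"
    by (simp add: filter_sort)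
  also have "\<dots> = card {l. l < n \<and> P (x l)}"
    by (simp add: length_filter_conv_card cong: conj_cong)
  finally show ?thesis
    using sorted_nth_downclosed_iff[of "sort (map x [0..<n])" P "i - 1"] assms
    unfolding order_stat_def by auto
qed

lemma order_stat_increase_witness:
  assumes "1 \<le> i" "i \<le> n" "order_stat n i x < order_stat n i y"
  shows "\<exists>l<n. x l \<le> order_stat n i x \<and> order_stat n i x < y l"
proof -
  let ?z = "order_stat n i x"
  have "i \<le> card {l. l < n \<and> x l \<le> ?z}"
    using order_stat_downclosed_iff[of "\<lambda>v. v \<le> ?z" i n x] assms(1,2) by simp
  moreover have "\<not> i \<le> card {l. l < n \<and> y l \<le> ?z}"
    using order_stat_downclosed_iff[of "\<lambda>v. v \<le> ?z" i n y] assms by simp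
  moreover have "finite {l. l < n \<and> y l \<le> ?z}"
    by simp
  ultimately have "\<not> {l. l < n \<and> x l \<le> ?z} \<subseteq> {l. l < n \<and> y l \<le> ?z}"
    using card_mono le_trans by blast
  then show ?thesis
    by auto
qed

lemma order_stat_decrease_witness:
  assumes "1 \<le> i" "i \<le> n" "order_stat n i y < order_stat n i x"
  shows "\<exists>l<n. order_stat n i x \<le> x l \<and> y l < order_stat n i x"
proof -
  let ?z = "order_stat n i x"
  have "\<not> i \<le> card {l. l < n \<and> x l < ?z}"
    using order_stat_downclosed_iff[of "\<lambda>v. v < ?z" i n x] assms(1,2) by simp
  moreover have "i \<le> card {l. l < n \<and> y l < ?z}"
    using order_stat_downclosed_iff[of "\<lambda>v. v < ?z" i n y] assms by simp
  moreover have "finite {l. l < n \<and> x l < ?z}"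
    by simp
  ultimately have "\<not> {l. l < n \<and> y l < ?z} \<subseteq> {l. l < n \<and> x l < ?z}"
    using card_mono le_trans by blast
  then show ?thesis
    by auto
qed

lemma group_strategyproof_order_stat:
  fixes g :: "real \<Rightarrow> outcome"
  assumes "1 \<le> i" "i \<le> n"
    and mono_right: "\<And>x z z'. x \<le> z \<Longrightarrow> z \<le> z' \<Longrightarrow> cost (g z) x \<le> cost (g z') x"
    and mono_left: "\<And>x z z'. z \<le> x \<Longrightarrow> z' \<le> z \<Longrightarrow> cost (g z) x \<le> cost (g z') x"
  shows "group_strategyproof n (\<lambda>x. g (order_stat n i x))"
  unfolding group_strategyproof_def
proof (intro allI impI)
  fix x x' :: profile and S :: "nat set"
  assume S: "S \<subseteq> {0..<n} \<and> S \<noteq> {}"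
  define y where "y = (\<lambda>l. if l \<in> S then x' l else x l)"
  let ?z = "order_stat n i x" and ?z' = "order_stat n i y"
  have deviator: "l \<in> S" if "y l \<noteq> x l" for l
    using that unfolding y_def by (auto split: if_splits)
  consider "?z < ?z'" | "?z = ?z'" | "?z' < ?z"
    by linarith
  then have "\<exists>j\<in>S. cost (g ?z) (x j) \<le> cost (g ?z') (x j)"
  proof cases
    case 1
    then obtain l where "x l \<le> ?z" "?z < y l"
      using order_stat_increase_witness[OF assms(1,2)] by blast
    then show ?thesis
      using deviator[of l] mono_right[of "x l" ?z ?z'] 1 by force
  next
    case 3
    then obtain l where "?z \<le> x l" "y l < ?z"
      using order_stat_decrease_witness[OF assms(1,2)] by blast
    then show ?thesis
      using deviator[of l] mono_left[of ?z "x l" ?z'] 3 by force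
  qed (use S in auto)
  then show "\<exists>j\<in>S. cost (g ?z) (x j) \<le> cost (g (order_stat n i (\<lambda>l. if l \<in> S then x' l else x l))) (x j)"
    unfolding y_def .
qed

theorem lemma1:
  fixes a :: "real list" and n i :: nat
  assumes "sorted a" and "length a \<ge> 2"
    and "1 \<le> i" and "i \<le> n"
  shows "group_strategyproof n (peak_mechanism a n i)"
  unfolding peak_mechanism_def
  using group_strategyproof_order_stat[OF assms(3,4)]
    cost_peak_mono_right[OF assms(1,2)] cost_peak_mono_left[OF assms(1,2)]
  by blast

end
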